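(* Let $\Delta$ be a thick building with Weyl group $W$, and let $G$ be a group acting strongly transitively on $\Delta$ with respect to the complete apartment system $\overline{\mathcal{A}}$. Fix an apartment $\Sigma_0\in\overline{\mathcal{A}}$, let $N=\mathrm{Stab}_G(\Sigma_0)$ and $T=\{t\in N \mid tC=C \text{ for all chambers } C \text{ of } \Sigma_0\}$. Then for a subgroup $H$ of $G$ the following are equivalent: (i) $H$ acts weakly transitively on $\Delta$; (ii) there exists $g\in G$ such that $g(nT)g^{-1}\cap H\neq\emptyset$ for all $n\in N$.
   Context: For a thick building $\Delta$ with Coxeter system $(W,S)$ of finite rank, $\overline{\mathcal{A}}$ denotes its complete system of apartments. A subset $\mathcal{A}\subseteq\overline{\mathcal{A}}$ is a system of apartments if any two chambers lie in a common apartment of $\mathcal{A}$. A type-preserving action of a group $H$ on $\Delta$ is strongly transitive with respect to $\mathcal{A}$ if $H$ acts transitively on $\{(C,\Sigma)\mid \Sigma\in\mathcal{A},\ C \text{ a chamber of }\Sigma\}$. A type-preserving action of $H$ on $\Delta$ is called weakly transitive if there exists an apartment $\Sigma\in\overline{\mathcal{A}}$ such that $\mathrm{Stab}_H(\Sigma)$ acts transitively on the chambers of $\Sigma$. (Note $N/T$ identifies with $W$, the type-preserving automorphism group of $\Sigma_0$.) *)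

theory Defs
  imports "HOL-Algebra.Group_Action"
begin

definition wprod :: "('w, 'b) monoid_scheme \<Rightarrow> 'w list \<Rightarrow> 'w" where
  "wprod W ws = foldr (\<lambda>s w. s \<otimes>\<^bsub>W\<^esub> w) ws \<one>\<^bsub>W\<^esub>"

definition cox_length :: "('w, 'b) monoid_scheme \<Rightarrow> 'w set \<Rightarrow> 'w \<Rightarrow> nat" where
  "cox_length W S w = (LEAST n. \<exists>ws. set ws \<subseteq> S \<and> length ws = n \<and> wprod W ws = w)"

text \<open>Coxeter system, characterised (as in Bourbaki) by the exchange condition.\<close>
definition coxeter_system :: "('w, 'b) monoid_scheme \<Rightarrow> 'w set \<Rightarrow> bool" where
  "coxeter_system W S \<longleftrightarrow> group W \<and> finite S \<and> S \<subseteq> carrier W \<and> \<one>\<^bsub>W\<^esub> \<notin> S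
    \<and> (\<forall>s\<in>S. s \<otimes>\<^bsub>W\<^esub> s = \<one>\<^bsub>W\<^esub>)
    \<and> (\<forall>w\<in>carrier W. \<exists>ws. set ws \<subseteq> S \<and> wprod W ws = w)
    \<and> (\<forall>ws s. set ws \<subseteq> S \<longrightarrow> s \<in> S \<longrightarrow> length ws = cox_length W S (wprod W ws)
         \<longrightarrow> cox_length W S (s \<otimes>\<^bsub>W\<^esub> wprod W ws) \<le> cox_length W S (wprod W ws)
         \<longrightarrow> (\<exists>i<length ws. s \<otimes>\<^bsub>W\<^esub> wprod W ws = wprod W (take i ws @ drop (Suc i) ws)))"

definition building ::
  "('w, 'b) monoid_scheme \<Rightarrow> 'w set \<Rightarrow> 'c set \<Rightarrow> ('c \<Rightarrow> 'c \<Rightarrow> 'w) \<Rightarrow> bool" where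
  "building W S Ch \<delta> \<longleftrightarrow> coxeter_system W S \<and> Ch \<noteq> {}
    \<and> (\<forall>C\<in>Ch. \<forall>D\<in>Ch. \<delta> C D \<in> carrier W)
    \<and> (\<forall>C\<in>Ch. \<forall>D\<in>Ch. \<delta> C D = \<one>\<^bsub>W\<^esub> \<longleftrightarrow> C = D)
    \<and> (\<forall>C\<in>Ch. \<forall>D\<in>Ch. \<forall>C'\<in>Ch. \<forall>s\<in>S. \<delta> C' C = s \<longrightarrow>
         \<delta> C' D \<in> {s \<otimes>\<^bsub>W\<^esub> \<delta> C D, \<delta> C D}
         \<and> (cox_length W S (s \<otimes>\<^bsub>W\<^esub> \<delta> C D) = cox_length W S (\<delta> C D) + 1
              \<longrightarrow> \<delta> C' D = s \<otimes>\<^bsub>W\<^esub> \<delta> C D))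
    \<and> (\<forall>C\<in>Ch. \<forall>D\<in>Ch. \<forall>s\<in>S. \<exists>C'\<in>Ch. \<delta> C' C = s \<and> \<delta> C' D = s \<otimes>\<^bsub>W\<^esub> \<delta> C D)"

definition thick_building ::
  "('w, 'b) monoid_scheme \<Rightarrow> 'w set \<Rightarrow> 'c set \<Rightarrow> ('c \<Rightarrow> 'c \<Rightarrow> 'w) \<Rightarrow> bool" where
  "thick_building W S Ch \<delta> \<longleftrightarrow> building W S Ch \<delta>
    \<and> (\<forall>C\<in>Ch. \<forall>s\<in>S. \<exists>D1 D2 D3. {D1, D2, D3} \<subseteq> {D\<in>Ch. \<delta> C D \<in> {\<one>\<^bsub>W\<^esub>, s}}
          \<and> D1 \<noteq> D2 \<and> D1 \<noteq> D3 \<and> D2 \<noteq> D3)"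

text \<open>Apartments of the complete apartment system: images of isometries W \<rightarrow> Delta.
  An apartment is represented by its set of chambers.\<close>
definition is_apartment ::
  "('w, 'b) monoid_scheme \<Rightarrow> 'c set \<Rightarrow> ('c \<Rightarrow> 'c \<Rightarrow> 'w) \<Rightarrow> 'c set \<Rightarrow> bool" where
  "is_apartment W Ch \<delta> \<Sigma> \<longleftrightarrow> (\<exists>f. f \<in> carrier W \<rightarrow> Ch \<and> \<Sigma> = f ` carrier W
     \<and> (\<forall>u\<in>carrier W. \<forall>v\<in>carrier W. \<delta> (f u) (f v) = inv\<^bsub>W\<^esub> u \<otimes>\<^bsub>W\<^esub> v))"

definition type_preserving_action ::
  "('g, 'e) monoid_scheme \<Rightarrow> 'c set \<Rightarrow> ('c \<Rightarrow> 'c \<Rightarrow> 'w) \<Rightarrow> ('g \<Rightarrow> 'c \<Rightarrow> 'c) \<Rightarrow> bool" where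
  "type_preserving_action G Ch \<delta> act \<longleftrightarrow> group_action G Ch act
    \<and> (\<forall>g\<in>carrier G. \<forall>C\<in>Ch. \<forall>D\<in>Ch. \<delta> (act g C) (act g D) = \<delta> C D)"

definition strongly_transitive ::
  "('w, 'b) monoid_scheme \<Rightarrow> 'c set \<Rightarrow> ('c \<Rightarrow> 'c \<Rightarrow> 'w) \<Rightarrow> ('g \<Rightarrow> 'c \<Rightarrow> 'c) \<Rightarrow> 'g set \<Rightarrow> bool" where
  "strongly_transitive W Ch \<delta> act H \<longleftrightarrow>
    (\<forall>\<Sigma>1 \<Sigma>2 C1 C2. is_apartment W Ch \<delta> \<Sigma>1 \<longrightarrow> is_apartment W Ch \<delta> \<Sigma>2 \<longrightarrow> C1 \<in> \<Sigma>1 \<longrightarrow> C2 \<in> \<Sigma>2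
       \<longrightarrow> (\<exists>h\<in>H. act h ` \<Sigma>1 = \<Sigma>2 \<and> act h C1 = C2))"

definition apt_stab :: "('g \<Rightarrow> 'c \<Rightarrow> 'c) \<Rightarrow> 'g set \<Rightarrow> 'c set \<Rightarrow> 'g set" where
  "apt_stab act H \<Sigma> = {h\<in>H. act h ` \<Sigma> = \<Sigma>}"

definition weakly_transitive ::
  "('w, 'b) monoid_scheme \<Rightarrow> 'c set \<Rightarrow> ('c \<Rightarrow> 'c \<Rightarrow> 'w) \<Rightarrow> ('g \<Rightarrow> 'c \<Rightarrow> 'c) \<Rightarrow> 'g set \<Rightarrow> bool" where
  "weakly_transitive W Ch \<delta> act H \<longleftrightarrow>
    (\<exists>\<Sigma>. is_apartment W Ch \<delta> \<Sigma> \<and> (\<forall>C\<in>\<Sigma>. \<forall>D\<in>\<Sigma>. \<exists>h\<in>apt_stab act H \<Sigma>. act h C = D))"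

definition apt_fix :: "('g \<Rightarrow> 'c \<Rightarrow> 'c) \<Rightarrow> 'g set \<Rightarrow> 'c set \<Rightarrow> 'g set" where
  "apt_fix act H \<Sigma> = {t\<in>apt_stab act H \<Sigma>. \<forall>C\<in>\<Sigma>. act t C = C}"

end

theory Submission
  imports Defs
begin

text \<open>
  Strong transitivity makes the apartments exactly the translates \<open>g\<Sigma>\<^sub>0\<close>, and makes the
  stabiliser \<open>N\<^sub>\<Sigma>\<close> of an apartment \<open>\<Sigma>\<close> transitive on its chambers. An isometry of an
  apartment is determined by the image of a single chamber, so the elements of \<open>N\<^sub>\<Sigma>\<close> moving a
  chamber \<open>C\<close> to \<open>nC\<close> form exactly the coset \<open>nT\<^sub>\<Sigma>\<close> of the pointwise fixer. Hence
  \<open>Stab\<^sub>H(\<Sigma>)\<close> is chamber-transitive iff \<open>H\<close> meets every coset \<open>nT\<^sub>\<Sigma>\<close>; for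
  \<open>\<Sigma> = g\<Sigma>\<^sub>0\<close> one has \<open>N\<^sub>\<Sigma> = gNg\<^sup>-\<^sup>1\<close> and \<open>T\<^sub>\<Sigma> = gTg\<^sup>-\<^sup>1\<close>, which gives (ii).
\<close>

lemma (in group) conj_coset_eq_image:
  assumes "A \<subseteq> carrier G" "g \<in> carrier G"
  shows "(g <# A) #> inv g = (\<lambda>x. g \<otimes> x \<otimes> inv g) ` A"
  using assms by (auto simp: l_coset_def r_coset_def)

lemma (in group) conj_image_l_coset:
  assumes "A \<subseteq> carrier G" "g \<in> carrier G" "n \<in> carrier G"
  shows "(\<lambda>x. g \<otimes> x \<otimes> inv g) ` (n <# A) = (g \<otimes> n \<otimes> inv g) <# (\<lambda>x. g \<otimes> x \<otimes> inv g) ` A"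
proof -
  have cancel: "x \<otimes> inv g \<otimes> g = x" if "x \<in> carrier G" for x
    using assms that by (simp add: m_assoc)
  have "g \<otimes> (n \<otimes> a) \<otimes> inv g = g \<otimes> n \<otimes> inv g \<otimes> (g \<otimes> a \<otimes> inv g)" if "a \<in> A" for a
    using assms that by (auto simp: m_assoc[symmetric] cancel)
  then show ?thesis by (force simp: l_coset_def image_iff)
qed

lemma (in group_action) image_composition:
  assumes "A \<subseteq> E" "g \<in> carrier G" "h \<in> carrier G"
  shows "\<phi> (g \<otimes> h) ` A = \<phi> g ` \<phi> h ` A"
  unfolding image_image using assms by (intro image_cong) (auto simp: composition_rule)

lemma (in group_action) image_closed:
  assumes "A \<subseteq> E" "g \<in> carrier G"
  shows "\<phi> g ` A \<subseteq> E"
  using assms element_image by blast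

lemma (in group_action) image_inv_image:
  assumes "A \<subseteq> E" "g \<in> carrier G"
  shows "\<phi> (inv g) ` \<phi> g ` A = A"
proof -
  have "\<phi> (inv g) (\<phi> g x) = x" if "x \<in> A" for x
    using assms that orbit_sym_aux by blast
  then show ?thesis
    by (simp add: image_image)
qed

lemma (in group_action) act_conj:
  assumes "x \<in> E" "g \<in> carrier G" "h \<in> carrier G"
  shows "\<phi> (g \<otimes> h \<otimes> inv g) (\<phi> g x) = \<phi> g (\<phi> h x)"
proof -
  interpret group G using group_hom group_hom.axioms(1) by blast
  have "\<phi> g x \<in> E" using assms(1,2) element_image by blast
  then have "\<phi> (g \<otimes> h \<otimes> inv g) (\<phi> g x) = \<phi> (g \<otimes> h) (\<phi> (inv g) (\<phi> g x))"
    using assms(2,3) composition_rule by simp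
  also have "\<dots> = \<phi> g (\<phi> h x)"
    using assms composition_rule orbit_sym_aux[OF assms(2,1) refl] by simp
  finally show ?thesis .
qed

lemma (in group_action) image_conj:
  assumes "A \<subseteq> E" "g \<in> carrier G" "h \<in> carrier G"
  shows "\<phi> (g \<otimes> h \<otimes> inv g) ` \<phi> g ` A = \<phi> g ` \<phi> h ` A"
  unfolding image_image using assms by (intro image_cong) (auto simp: act_conj)

lemma (in group_action) apt_stab_image:
  assumes "\<Sigma> \<subseteq> E" "g \<in> carrier G"
  shows "apt_stab \<phi> (carrier G) (\<phi> g ` \<Sigma>) = (\<lambda>x. g \<otimes> x \<otimes> inv g) ` apt_stab \<phi> (carrier G) \<Sigma>"
proof -
  interpret group G using group_hom group_hom.axioms(1) by blast
  show ?thesis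
  proof (intro equalityI subsetI)
    fix h assume "h \<in> apt_stab \<phi> (carrier G) (\<phi> g ` \<Sigma>)"
    then have h: "h \<in> carrier G" "\<phi> h ` \<phi> g ` \<Sigma> = \<phi> g ` \<Sigma>" by (auto simp: apt_stab_def)
    define x where "x = inv g \<otimes> h \<otimes> g"
    have x: "x \<in> carrier G" using h(1) assms(2) by (simp add: x_def)
    have "\<phi> x ` \<Sigma> = \<phi> (inv g) ` \<phi> h ` \<phi> g ` \<Sigma>"
      using h(1) assms by (simp add: x_def image_composition image_closed)
    also have "\<dots> = \<Sigma>"
      using h(2) image_inv_image[OF assms] by simp
    moreover have "h = g \<otimes> x \<otimes> inv g"
      using h(1) assms(2) by (simp add: x_def m_assoc) (simp add: m_assoc[symmetric])
    ultimately show "h \<in> (\<lambda>x. g \<otimes> x \<otimes> inv g) ` apt_stab \<phi> (carrier G) \<Sigma>"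
      using x by (auto simp: apt_stab_def)
  next
    fix h assume "h \<in> (\<lambda>x. g \<otimes> x \<otimes> inv g) ` apt_stab \<phi> (carrier G) \<Sigma>"
    then obtain x where x: "x \<in> carrier G" "\<phi> x ` \<Sigma> = \<Sigma>" "h = g \<otimes> x \<otimes> inv g"
      by (auto simp: apt_stab_def)
    then show "h \<in> apt_stab \<phi> (carrier G) (\<phi> g ` \<Sigma>)"
      using assms image_conj[OF assms x(1)] by (simp add: apt_stab_def)
  qed
qed

lemma (in group_action) apt_fix_image:
  assumes "\<Sigma> \<subseteq> E" "g \<in> carrier G"
  shows "apt_fix \<phi> (carrier G) (\<phi> g ` \<Sigma>) = (\<lambda>x. g \<otimes> x \<otimes> inv g) ` apt_fix \<phi> (carrier G) \<Sigma>"
proof -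
  interpret group G using group_hom group_hom.axioms(1) by blast
  have fixes_iff: "\<phi> (g \<otimes> x \<otimes> inv g) (\<phi> g C) = \<phi> g C \<longleftrightarrow> \<phi> x C = C"
    if "x \<in> carrier G" "C \<in> \<Sigma>" for x C
  proof -
    have "C \<in> E" "\<phi> x C \<in> E" using assms(1) that element_image by auto
    then show ?thesis
      using act_conj[OF \<open>C \<in> E\<close> assms(2) that(1)] inj_prop[OF assms(2)]
      by (simp add: inj_on_eq_iff)
  qed
  have "apt_fix \<phi> (carrier G) (\<phi> g ` \<Sigma>)
      = (\<lambda>x. g \<otimes> x \<otimes> inv g) ` {x \<in> apt_stab \<phi> (carrier G) \<Sigma>. \<forall>C\<in>\<phi> g ` \<Sigma>. \<phi> (g \<otimes> x \<otimes> inv g) C = C}"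
    unfolding apt_fix_def apt_stab_image[OF assms] by (rule Compr_image_eq)
  also have "\<dots> = (\<lambda>x. g \<otimes> x \<otimes> inv g) ` apt_fix \<phi> (carrier G) \<Sigma>"
    unfolding apt_fix_def by (intro arg_cong[where f = "image _"]) (auto simp: apt_stab_def fixes_iff)
  finally show ?thesis .
qed

lemma (in group_action) apt_stab_subgroup:
  assumes "\<Sigma> \<subseteq> E"
  shows "subgroup (apt_stab \<phi> (carrier G) \<Sigma>) G"
proof -
  interpret group G using group_hom group_hom.axioms(1) by blast
  have "\<phi> \<one> ` \<Sigma> = \<Sigma>"
    using assms id_eq_one[symmetric] by (force simp: image_iff)
  moreover have "\<phi> (inv x) ` \<Sigma> = \<Sigma>" if "x \<in> carrier G" "\<phi> x ` \<Sigma> = \<Sigma>" for x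
    using image_inv_image[OF assms that(1)] that(2) by simp
  ultimately show ?thesis
    using assms by unfold_locales (auto simp: apt_stab_def image_composition)
qed

lemma (in group_action) l_coset_apt_fix_image:
  assumes "\<Sigma> \<subseteq> E" "g \<in> carrier G" "n \<in> apt_stab \<phi> (carrier G) \<Sigma>"
  shows "(g <# (n <# apt_fix \<phi> (carrier G) \<Sigma>)) #> inv g
    = (g \<otimes> n \<otimes> inv g) <# apt_fix \<phi> (carrier G) (\<phi> g ` \<Sigma>)"
proof -
  interpret group G using group_hom group_hom.axioms(1) by blast
  have "apt_fix \<phi> (carrier G) \<Sigma> \<subseteq> carrier G" "n \<in> carrier G"
    using assms(3) by (auto simp: apt_fix_def apt_stab_def)
  then show ?thesis
    using assms by (simp add: conj_coset_eq_image l_coset_subset_G conj_image_l_coset apt_fix_image)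
qed

definition apt_stab_transitive :: "('g \<Rightarrow> 'c \<Rightarrow> 'c) \<Rightarrow> 'g set \<Rightarrow> 'c set \<Rightarrow> bool" where
  "apt_stab_transitive act H \<Sigma> \<longleftrightarrow> (\<forall>C\<in>\<Sigma>. \<forall>D\<in>\<Sigma>. \<exists>h\<in>apt_stab act H \<Sigma>. act h C = D)"

lemma weakly_transitive_iff_apt_stab_transitive:
  "weakly_transitive W Ch \<delta> act H \<longleftrightarrow> (\<exists>\<Sigma>. is_apartment W Ch \<delta> \<Sigma> \<and> apt_stab_transitive act H \<Sigma>)"
  by (simp add: weakly_transitive_def apt_stab_transitive_def)

lemma apartment_subset:
  assumes "is_apartment W Ch \<delta> \<Sigma>"
  shows "\<Sigma> \<subseteq> Ch"
  using assms by (auto simp: is_apartment_def)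

lemma apartment_nonempty:
  assumes "group W" "is_apartment W Ch \<delta> \<Sigma>"
  shows "\<Sigma> \<noteq> {}"
  using assms group.is_monoid monoid.one_closed by (fastforce simp: is_apartment_def)

lemma apartment_chamber_eqI:
  assumes "group W" "is_apartment W Ch \<delta> \<Sigma>" "C \<in> \<Sigma>" "D \<in> \<Sigma>" "D' \<in> \<Sigma>"
    and "\<delta> C D = \<delta> C D'"
  shows "D = D'"
proof -
  interpret group W by fact
  obtain f where f: "\<Sigma> = f ` carrier W"
    "\<forall>u\<in>carrier W. \<forall>v\<in>carrier W. \<delta> (f u) (f v) = inv\<^bsub>W\<^esub> u \<otimes>\<^bsub>W\<^esub> v"
    using assms(2) unfolding is_apartment_def by blast
  then show ?thesis
    using assms(3-6) by auto
qed

locale isometric_action = group_action G Ch act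
  for G :: "('g, 'e) monoid_scheme" (structure) and Ch :: "'c set" and act +
  fixes W :: "('w, 'b) monoid_scheme" and \<delta> :: "'c \<Rightarrow> 'c \<Rightarrow> 'w"
  assumes W_group: "group W"
    and isometric: "\<lbrakk>g \<in> carrier G; C \<in> Ch; D \<in> Ch\<rbrakk> \<Longrightarrow> \<delta> (act g C) (act g D) = \<delta> C D"
begin

lemma apartment_image:
  assumes "is_apartment W Ch \<delta> \<Sigma>" "g \<in> carrier G"
  shows "is_apartment W Ch \<delta> (act g ` \<Sigma>)"
proof -
  obtain f where f: "f \<in> carrier W \<rightarrow> Ch" "\<Sigma> = f ` carrier W"
    "\<forall>u\<in>carrier W. \<forall>v\<in>carrier W. \<delta> (f u) (f v) = inv\<^bsub>W\<^esub> u \<otimes>\<^bsub>W\<^esub> v"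
    using assms(1) unfolding is_apartment_def by blast
  have "act g \<circ> f \<in> carrier W \<rightarrow> Ch"
    using f(1) assms(2) element_image by (auto simp: Pi_iff)
  moreover have "\<delta> ((act g \<circ> f) u) ((act g \<circ> f) v) = inv\<^bsub>W\<^esub> u \<otimes>\<^bsub>W\<^esub> v"
    if "u \<in> carrier W" "v \<in> carrier W" for u v
    using f that by (simp add: isometric[OF assms(2)] funcset_mem[OF f(1)])
  ultimately show ?thesis
    unfolding is_apartment_def f(2) image_comp by blast
qed

lemma apartment_iff_translate:
  assumes "strongly_transitive W Ch \<delta> act (carrier G)" "is_apartment W Ch \<delta> \<Sigma>0"
  shows "is_apartment W Ch \<delta> \<Sigma> \<longleftrightarrow> (\<exists>g\<in>carrier G. \<Sigma> = act g ` \<Sigma>0)"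
proof
  assume "is_apartment W Ch \<delta> \<Sigma>"
  moreover obtain C0 C where "C0 \<in> \<Sigma>0" "C \<in> \<Sigma>"
    using apartment_nonempty[OF W_group] assms(2) \<open>is_apartment W Ch \<delta> \<Sigma>\<close> by blast
  ultimately show "\<exists>g\<in>carrier G. \<Sigma> = act g ` \<Sigma>0"
    using assms unfolding strongly_transitive_def by metis
qed (use assms(2) apartment_image in blast)

lemma apt_fix_if_fixes_chamber:
  assumes "is_apartment W Ch \<delta> \<Sigma>" "x \<in> apt_stab act (carrier G) \<Sigma>" "C \<in> \<Sigma>" "act x C = C"
  shows "x \<in> apt_fix act (carrier G) \<Sigma>"
proof -
  have x: "x \<in> carrier G" "act x ` \<Sigma> = \<Sigma>" using assms(2) by (auto simp: apt_stab_def)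
  have "act x D = D" if "D \<in> \<Sigma>" for D
  proof -
    have "C \<in> Ch" "D \<in> Ch" using apartment_subset[OF assms(1)] assms(3) that by auto
    then have "\<delta> C (act x D) = \<delta> C D"
      using isometric[OF x(1)] assms(4) by metis
    then show ?thesis
      using apartment_chamber_eqI[OF W_group assms(1,3)] x(2) that by blast
  qed
  then show ?thesis using assms(2) by (simp add: apt_fix_def)
qed

lemma l_coset_apt_fix:
  assumes "is_apartment W Ch \<delta> \<Sigma>" "n \<in> apt_stab act (carrier G) \<Sigma>" "C \<in> \<Sigma>"
  shows "n <# apt_fix act (carrier G) \<Sigma> = {x \<in> apt_stab act (carrier G) \<Sigma>. act x C = act n C}"
proof -
  interpret group G using group_hom group_hom.axioms(1) by blast
  interpret N: subgroup "apt_stab act (carrier G) \<Sigma>" G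
    using apt_stab_subgroup apartment_subset assms(1) by blast
  have C: "C \<in> Ch" using assms(1,3) apartment_subset by blast
  show ?thesis
  proof (intro equalityI subsetI)
    fix x assume "x \<in> n <# apt_fix act (carrier G) \<Sigma>"
    then obtain t where "t \<in> apt_fix act (carrier G) \<Sigma>" "x = n \<otimes> t"
      by (auto simp: l_coset_def)
    then show "x \<in> {x \<in> apt_stab act (carrier G) \<Sigma>. act x C = act n C}"
      using assms(2,3) C by (auto simp: apt_fix_def composition_rule)
  next
    fix x assume x: "x \<in> {x \<in> apt_stab act (carrier G) \<Sigma>. act x C = act n C}"
    define t where "t = inv n \<otimes> x"
    have "t \<in> apt_stab act (carrier G) \<Sigma>" using x assms(2) by (simp add: t_def)
    moreover have "act t C = C"
      using x assms(2) C by (simp add: t_def composition_rule orbit_sym_aux)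
    ultimately have "t \<in> apt_fix act (carrier G) \<Sigma>"
      using apt_fix_if_fixes_chamber assms(1,3) by blast
    moreover have "x = n \<otimes> t"
      using x assms(2) by (simp add: t_def m_assoc[symmetric])
    ultimately show "x \<in> n <# apt_fix act (carrier G) \<Sigma>"
      by (auto simp: l_coset_def)
  qed
qed

lemma apt_stab_transitive_iff_meets_cosets:
  assumes "strongly_transitive W Ch \<delta> act (carrier G)" "is_apartment W Ch \<delta> \<Sigma>"
    and "K \<subseteq> carrier G"
  shows "apt_stab_transitive act K \<Sigma> \<longleftrightarrow>
    (\<forall>n\<in>apt_stab act (carrier G) \<Sigma>. (n <# apt_fix act (carrier G) \<Sigma>) \<inter> K \<noteq> {})"
proof
  assume trans: "apt_stab_transitive act K \<Sigma>"
  show "\<forall>n\<in>apt_stab act (carrier G) \<Sigma>. (n <# apt_fix act (carrier G) \<Sigma>) \<inter> K \<noteq> {}"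
  proof
    fix n assume n: "n \<in> apt_stab act (carrier G) \<Sigma>"
    obtain C where C: "C \<in> \<Sigma>" using apartment_nonempty[OF W_group assms(2)] by blast
    then have "act n C \<in> \<Sigma>" using n by (auto simp: apt_stab_def)
    then obtain h where h: "h \<in> apt_stab act K \<Sigma>" "act h C = act n C"
      using trans C unfolding apt_stab_transitive_def by blast
    then have "h \<in> K" "h \<in> apt_stab act (carrier G) \<Sigma>"
      using assms(3) by (auto simp: apt_stab_def)
    then show "(n <# apt_fix act (carrier G) \<Sigma>) \<inter> K \<noteq> {}"
      using l_coset_apt_fix[OF assms(2) n C] h(2) by blast
  qed
next
  assume meets: "\<forall>n\<in>apt_stab act (carrier G) \<Sigma>. (n <# apt_fix act (carrier G) \<Sigma>) \<inter> K \<noteq> {}"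
  show "apt_stab_transitive act K \<Sigma>"
    unfolding apt_stab_transitive_def
  proof (intro ballI)
    fix C D assume CD: "C \<in> \<Sigma>" "D \<in> \<Sigma>"
    obtain n where n: "n \<in> apt_stab act (carrier G) \<Sigma>" "act n C = D"
      using assms(1)[unfolded strongly_transitive_def, rule_format, OF assms(2) assms(2) CD]
      by (auto simp: apt_stab_def)
    then obtain h where "h \<in> n <# apt_fix act (carrier G) \<Sigma>" "h \<in> K"
      using meets by blast
    then have "h \<in> apt_stab act K \<Sigma>" "act h C = D"
      using l_coset_apt_fix[OF assms(2) n(1) CD(1)] n(2) by (auto simp: apt_stab_def)
    then show "\<exists>h\<in>apt_stab act K \<Sigma>. act h C = D" by blast
  qed
qed

lemma apt_stab_transitive_translate_iff:
  assumes "strongly_transitive W Ch \<delta> act (carrier G)" "is_apartment W Ch \<delta> \<Sigma>0"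
    and "K \<subseteq> carrier G" "g \<in> carrier G"
  shows "apt_stab_transitive act K (act g ` \<Sigma>0) \<longleftrightarrow>
    (\<forall>n\<in>apt_stab act (carrier G) \<Sigma>0.
       ((g <# (n <# apt_fix act (carrier G) \<Sigma>0)) #> inv g) \<inter> K \<noteq> {})"
proof -
  interpret group G using group_hom group_hom.axioms(1) by blast
  have \<Sigma>0: "\<Sigma>0 \<subseteq> Ch" using assms(2) apartment_subset by blast
  have "apt_stab_transitive act K (act g ` \<Sigma>0) \<longleftrightarrow>
      (\<forall>m\<in>(\<lambda>x. g \<otimes> x \<otimes> inv g) ` apt_stab act (carrier G) \<Sigma>0.
         (m <# apt_fix act (carrier G) (act g ` \<Sigma>0)) \<inter> K \<noteq> {})"
    using apt_stab_transitive_iff_meets_cosets[OF assms(1) apartment_image[OF assms(2,4)] assms(3)]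
    by (simp only: apt_stab_image[OF \<Sigma>0 assms(4)])
  also have "\<dots> \<longleftrightarrow> (\<forall>n\<in>apt_stab act (carrier G) \<Sigma>0.
      ((g \<otimes> n \<otimes> inv g) <# apt_fix act (carrier G) (act g ` \<Sigma>0)) \<inter> K \<noteq> {})"
    by blast
  also have "\<dots> \<longleftrightarrow> (\<forall>n\<in>apt_stab act (carrier G) \<Sigma>0.
      ((g <# (n <# apt_fix act (carrier G) \<Sigma>0)) #> inv g) \<inter> K \<noteq> {})"
    using l_coset_apt_fix_image[OF \<Sigma>0 assms(4)] by simp
  finally show ?thesis .
qed

lemma weakly_transitive_iff_conj_cosets_meet:
  assumes "strongly_transitive W Ch \<delta> act (carrier G)" "is_apartment W Ch \<delta> \<Sigma>0"
    and "K \<subseteq> carrier G"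
  shows "weakly_transitive W Ch \<delta> act K \<longleftrightarrow>
    (\<exists>g\<in>carrier G. \<forall>n\<in>apt_stab act (carrier G) \<Sigma>0.
       ((g <# (n <# apt_fix act (carrier G) \<Sigma>0)) #> inv g) \<inter> K \<noteq> {})"
proof -
  have "weakly_transitive W Ch \<delta> act K \<longleftrightarrow> (\<exists>g\<in>carrier G. apt_stab_transitive act K (act g ` \<Sigma>0))"
    unfolding weakly_transitive_iff_apt_stab_transitive apartment_iff_translate[OF assms(1,2)]
    by blast
  then show ?thesis
    using apt_stab_transitive_translate_iff[OF assms] by auto
qed

end

theorem lemma2p3:
  fixes W :: "('w, 'b) monoid_scheme" and S :: "'w set"
    and Ch :: "'c set" and \<delta> :: "'c \<Rightarrow> 'c \<Rightarrow> 'w"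
    and G :: "('g, 'e) monoid_scheme" and act :: "'g \<Rightarrow> 'c \<Rightarrow> 'c"
    and \<Sigma>0 :: "'c set" and H :: "'g set"
  assumes "thick_building W S Ch \<delta>"
    and "type_preserving_action G Ch \<delta> act"
    and "strongly_transitive W Ch \<delta> act (carrier G)"
    and "is_apartment W Ch \<delta> \<Sigma>0"
    and "subgroup H G"
  shows "weakly_transitive W Ch \<delta> act H \<longleftrightarrow>
    (\<exists>g\<in>carrier G. \<forall>n\<in>apt_stab act (carrier G) \<Sigma>0.
       ((g <#\<^bsub>G\<^esub> (n <#\<^bsub>G\<^esub> apt_fix act (carrier G) \<Sigma>0)) #>\<^bsub>G\<^esub> inv\<^bsub>G\<^esub> g) \<inter> H \<noteq> {})"
proof -
  have "group W"
    using assms(1) by (simp add: thick_building_def building_def coxeter_system_def)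
  then interpret isometric_action G Ch act W \<delta>
    using assms(2)
    by (simp add: type_preserving_action_def isometric_action_def isometric_action_axioms_def)
  show ?thesis
    using weakly_transitive_iff_conj_cosets_meet[OF assms(3,4) subgroup.subset[OF assms(5)]] .
qed

end
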